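(* Let $k\ge 0$ and $\tau\ge 1$ be integers and $0<\kappa\le 1$. Then there exists an integer $K$ such that for every blockade $\mathcal{B}=(B_1,\ldots,B_K)$ of length $K$ and width $W$ in a graph, there is an equicardinal minor $\mathcal{B}'$ of $\mathcal{B}$ of length $k$ and width at least $\kappa^{2^K\tau^\tau}W$ such that $\mathcal{B}'$ is $\tau$-support-uniform and $(\kappa,\tau)$-support-invariant.
   Context: A blockade in a graph $G$ is a sequence $\mathcal{B}=(B_i:i\in I)$ of pairwise disjoint nonempty subsets of $V(G)$ (blocks), $I$ a finite set of integers; its length is $|I|$, its width is $\min_i|B_i|$; it is equicardinal if all blocks have the same cardinality. A sub-blockade is $(B_i:i\in I')$ for $I'\subseteq I$; a contraction is $(B_i':i\in I)$ with $\emptyset\ne B_i'\subseteq B_i$; a minor is a contraction of a sub-blockade. An induced subgraph $H$ of $G$ is $\mathcal{B}$-rainbow if each vertex of $H$ lies in some block and no two lie in the same block; its support is the set of $i\in I$ with $V(H)\cap B_i\neq\emptyset$. The $\mathcal{B}$-ordering of a $\mathcal{B}$-rainbow $H$ is the linear order on $V(H)$ with $u<v$ if $u\in B_i$, $v\in B_j$, $i<j$. An ordered graph is a graph with a linear order of its vertex set; a $\mathcal{B}$-rainbow $H$ is a copy of an ordered graph $J$ if $H$ with its $\mathcal{B}$-ordering is isomorphic to $J$ as ordered graphs. The trace of $J$ relative to $\mathcal{B}$ is the set of supports of all $\mathcal{B}$-rainbow copies of $J$. $\mathcal{B}$ is $\tau$-support-uniform if for every ordered tree $J$ with $|J|\le\tau$,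 the trace of $J$ relative to $\mathcal{B}$ is either empty or consists of all subsets of $I$ of cardinality $|J|$. $\mathcal{B}$ is $(\kappa,\tau)$-support-invariant if for every contraction $\mathcal{B}'$ of $\mathcal{B}$ of width at least $\kappa$ times the width of $\mathcal{B}$, and every ordered tree $J$ with $|J|\le\tau$, the trace of $J$ relative to $\mathcal{B}$ equals the trace of $J$ relative to $\mathcal{B}'$. *)

theory Defs
  imports Complex_Main
begin

definition graph :: "'v set \<Rightarrow> ('v \<Rightarrow> 'v \<Rightarrow> bool) \<Rightarrow> bool" where
  "graph V E \<longleftrightarrow> finite V \<and> (\<forall>x y. E x y \<longrightarrow> x \<in> V \<and> y \<in> V)
     \<and> (\<forall>x y. E x y \<longrightarrow> E y x) \<and> (\<forall>x. \<not> E x x)"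

definition blockade :: "'v set \<Rightarrow> int set \<Rightarrow> (int \<Rightarrow> 'v set) \<Rightarrow> bool" where
  "blockade V I B \<longleftrightarrow> finite I \<and> (\<forall>i\<in>I. B i \<noteq> {} \<and> B i \<subseteq> V)
     \<and> (\<forall>i\<in>I. \<forall>j\<in>I. i \<noteq> j \<longrightarrow> B i \<inter> B j = {})"

definition width :: "int set \<Rightarrow> (int \<Rightarrow> 'v set) \<Rightarrow> nat" where
  "width I B = Min ((\<lambda>i. card (B i)) ` I)"

text \<open>"width at least x" (min of block sizes \<ge> x; vacuous for empty index set).\<close>
definition width_at_least :: "int set \<Rightarrow> (int \<Rightarrow> 'v set) \<Rightarrow> real \<Rightarrow> bool" where
  "width_at_least I B x \<longleftrightarrow> (\<forall>i\<in>I. x \<le> real (card (B i)))"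

definition equicardinal :: "int set \<Rightarrow> (int \<Rightarrow> 'v set) \<Rightarrow> bool" where
  "equicardinal I B \<longleftrightarrow> (\<forall>i\<in>I. \<forall>j\<in>I. card (B i) = card (B j))"

definition contraction :: "int set \<Rightarrow> (int \<Rightarrow> 'v set) \<Rightarrow> (int \<Rightarrow> 'v set) \<Rightarrow> bool" where
  "contraction I B B' \<longleftrightarrow> (\<forall>i\<in>I. B' i \<noteq> {} \<and> B' i \<subseteq> B i)"

definition minor :: "int set \<Rightarrow> (int \<Rightarrow> 'v set) \<Rightarrow> int set \<Rightarrow> (int \<Rightarrow> 'v set) \<Rightarrow> bool" where
  "minor I B I' B' \<longleftrightarrow> I' \<subseteq> I \<and> contraction I' B B'"

text \<open>Ordered graphs: vertex set {0..<n} with the natural order, adjacency J.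
  Ordered tree: J a tree on {0..<n} (nonempty, connected, no cycles).\<close>
definition ordered_tree :: "nat \<Rightarrow> (nat \<Rightarrow> nat \<Rightarrow> bool) \<Rightarrow> bool" where
  "ordered_tree n J \<longleftrightarrow> n \<ge> 1
     \<and> (\<forall>a b. J a b \<longrightarrow> a < n \<and> b < n)
     \<and> (\<forall>a b. J a b \<longrightarrow> J b a) \<and> (\<forall>a. \<not> J a a)
     \<and> (\<forall>a<n. \<forall>b<n. J\<^sup>*\<^sup>* a b)
     \<and> \<not> (\<exists>cs. length cs \<ge> 3 \<and> distinct cs
            \<and> (\<forall>i<length cs. J (cs ! i) (cs ! ((i + 1) mod length cs))))"

definition rainbow :: "int set \<Rightarrow> (int \<Rightarrow> 'v set) \<Rightarrow> 'v set \<Rightarrow> bool" where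
  "rainbow I B X \<longleftrightarrow> (\<forall>x\<in>X. \<exists>i\<in>I. x \<in> B i)
     \<and> (\<forall>x\<in>X. \<forall>y\<in>X. \<forall>i\<in>I. x \<in> B i \<and> y \<in> B i \<longrightarrow> x = y)"

definition support :: "int set \<Rightarrow> (int \<Rightarrow> 'v set) \<Rightarrow> 'v set \<Rightarrow> int set" where
  "support I B X = {i\<in>I. X \<inter> B i \<noteq> {}}"

text \<open>The induced subgraph on X is a B-rainbow copy of the ordered graph (n, J):
  there is a bijection from {0..<n} to X which is an isomorphism of ordered graphs,
  where X carries the B-ordering.\<close>
definition rainbow_copy ::
  "('v \<Rightarrow> 'v \<Rightarrow> bool) \<Rightarrow> int set \<Rightarrow> (int \<Rightarrow> 'v set) \<Rightarrow> 'v set \<Rightarrow> nat \<Rightarrow> (nat \<Rightarrow> nat \<Rightarrow> bool) \<Rightarrow> bool" where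
  "rainbow_copy E I B X n J \<longleftrightarrow> rainbow I B X \<and>
     (\<exists>f. bij_betw f {0..<n} X
        \<and> (\<forall>a<n. \<forall>b<n. \<forall>i\<in>I. \<forall>j\<in>I. f a \<in> B i \<longrightarrow> f b \<in> B j \<longrightarrow> (a < b \<longleftrightarrow> i < j))
        \<and> (\<forall>a<n. \<forall>b<n. a \<noteq> b \<longrightarrow> (E (f a) (f b) \<longleftrightarrow> J a b)))"

definition trace ::
  "('v \<Rightarrow> 'v \<Rightarrow> bool) \<Rightarrow> int set \<Rightarrow> (int \<Rightarrow> 'v set) \<Rightarrow> nat \<Rightarrow> (nat \<Rightarrow> nat \<Rightarrow> bool) \<Rightarrow> int set set" where
  "trace E I B n J = {support I B X | X. rainbow_copy E I B X n J}"

definition support_uniform ::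
  "('v \<Rightarrow> 'v \<Rightarrow> bool) \<Rightarrow> int set \<Rightarrow> (int \<Rightarrow> 'v set) \<Rightarrow> nat \<Rightarrow> bool" where
  "support_uniform E I B \<tau> \<longleftrightarrow> (\<forall>n J. ordered_tree n J \<and> n \<le> \<tau> \<longrightarrow>
      trace E I B n J = {} \<or> trace E I B n J = {S. S \<subseteq> I \<and> card S = n})"

definition support_invariant ::
  "('v \<Rightarrow> 'v \<Rightarrow> bool) \<Rightarrow> int set \<Rightarrow> (int \<Rightarrow> 'v set) \<Rightarrow> real \<Rightarrow> nat \<Rightarrow> bool" where
  "support_invariant E I B \<kappa> \<tau> \<longleftrightarrow> (\<forall>B'. contraction I B B'
      \<and> width_at_least I B' (\<kappa> * real (width I B)) \<longrightarrow>
      (\<forall>n J. ordered_tree n J \<and> n \<le> \<tau> \<longrightarrow> trace E I B n J = trace E I B' n J))"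

end

theory Submission
  imports Defs "HOL-Library.Ramsey" "HOL-Library.Disjoint_Sets"
begin

text \<open>
  The trace profile of a blockade is the set of pairs \<open>(J, S)\<close> with \<open>J\<close> an ordered tree on
  at most \<open>\<tau>\<close> vertices and \<open>S\<close> in the trace of \<open>J\<close>. Passing to a contraction can only shrink
  it, and a contraction witnessing the failure of \<open>(\<kappa>, \<tau>)\<close>-support-invariance shrinks it
  strictly while losing only a factor \<open>\<kappa>\<close> of width. All supports have at most \<open>\<tau>\<close> elements,
  so for large \<open>K\<close> the profile has at most \<open>2^K\<close> elements and at most that many steps lead
  to a support-invariant contraction; cutting all its blocks down to the minimum size keeps it
  support-invariant. Support-invariance passes to sub-blockades, and Ramsey's theorem, applied
  simultaneously to the colourings "\<open>S\<close> lies in the trace of \<open>J\<close>", yields \<open>k\<close> indices on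
  which every trace is empty or complete.
\<close>

section \<open>Simultaneous Ramsey theorem\<close>

definition homogeneous :: "('a set \<Rightarrow> 'b) \<Rightarrow> nat \<Rightarrow> 'a set \<Rightarrow> bool" where
  "homogeneous c r H \<longleftrightarrow> (\<forall>X\<in>[H]\<^bsup>r\<^esup>. \<forall>Y\<in>[H]\<^bsup>r\<^esup>. c X = c Y)"

lemma homogeneous_subset: "homogeneous c r H \<Longrightarrow> H' \<subseteq> H \<Longrightarrow> homogeneous c r H'"
  unfolding homogeneous_def using nsets_mono by blast

lemma partn_lst_lepoll:
  assumes "partn_lst B qs r" and "B \<lesssim> A"
  shows "partn_lst A qs r"
  unfolding partn_lst_def
proof
  fix f assume f: "f \<in> [A]\<^bsup>r\<^esup> \<rightarrow> {..<length qs}"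
  obtain g where g: "inj_on g B" "g \<in> B \<rightarrow> A"
    using \<open>B \<lesssim> A\<close> by (auto simp: lepoll_def')
  have "f \<circ> (\<lambda>X. g ` X) \<in> [B]\<^bsup>r\<^esup> \<rightarrow> {..<length qs}"
    using nsets_compose_image_funcset[OF f g(2,1)] .
  then obtain i H where i: "i < length qs" and H: "H \<in> nsets B (qs ! i)"
    and mono: "(f \<circ> (\<lambda>X. g ` X)) ` [H]\<^bsup>r\<^esup> \<subseteq> {i}"
    using partn_lstE[OF assms(1)] by blast
  have inj: "inj_on g H"
    using g(1) H by (auto simp: nsets_def intro: inj_on_subset)
  have "g ` H \<subseteq> A"
    using H g(2) by (auto simp: nsets_def)
  then have "g ` H \<in> nsets A (qs ! i)"
    using H inj by (simp add: nsets_def card_image)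
  moreover have "f Y = i" if Y: "Y \<in> [g ` H]\<^bsup>r\<^esup>" for Y
  proof -
    obtain Z where "Z \<in> [H]\<^bsup>r\<^esup>" "Y = g ` Z"
      using nset_image_obtains[OF Y inj] by blast
    then show ?thesis
      using mono by auto
  qed
  ultimately show "\<exists>i<length qs. monochromatic A (qs ! i) r f i"
    using i unfolding monochromatic_def by blast
qed

lemma ramsey_simultaneous:
  assumes "finite T"
  shows "\<exists>N. \<forall>(A :: 'a set) (c :: 't \<Rightarrow> 'a set \<Rightarrow> bool). finite A \<and> N \<le> card A \<longrightarrow>
           (\<exists>H\<subseteq>A. card H = k \<and> (\<forall>t\<in>T. homogeneous (c t) (r t) H))"
  using assms
proof (induction T rule: finite_induct)
  case empty
  show ?case
    by (rule exI[of _ k]) (auto intro: obtain_subset_with_card_n)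
next
  case (insert t T)
  then obtain N' where N': "\<And>(A :: 'a set) (c :: 't \<Rightarrow> 'a set \<Rightarrow> bool). finite A \<Longrightarrow> N' \<le> card A \<Longrightarrow>
      \<exists>H\<subseteq>A. card H = k \<and> (\<forall>t\<in>T. homogeneous (c t) (r t) H)"
    by blast
  obtain N :: nat where N: "partn_lst {..<N} [N', N'] (r t)"
    using ramsey_full by blast
  show ?case
  proof (rule exI[of _ N], intro allI impI)
    fix A :: "'a set" and c :: "'t \<Rightarrow> 'a set \<Rightarrow> bool"
    assume A: "finite A \<and> N \<le> card A"
    then have "partn_lst A [N', N'] (r t)"
      by (intro partn_lst_lepoll[OF N]) (simp add: lepoll_iff_card_le)
    moreover have "(\<lambda>X. if c t X then 0 else 1) \<in> [A]\<^bsup>r t\<^esup> \<rightarrow> {..<length [N', N']}"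
      by simp
    ultimately obtain i H0 where H0: "H0 \<in> [A]\<^bsup>N'\<^esup>"
      and mono: "(\<lambda>X. if c t X then 0 else 1) ` [H0]\<^bsup>r t\<^esup> \<subseteq> {i :: nat}"
      by (rule partn_lstE) (auto simp: nth_Cons split: nat.splits)
    then have "homogeneous (c t) (r t) H0"
      unfolding homogeneous_def by (fastforce simp: image_subset_iff split: if_splits)
    moreover obtain H where H: "H \<subseteq> H0" "card H = k" "\<forall>t\<in>T. homogeneous (c t) (r t) H"
      using N'[of H0 c] H0 by (auto simp: nsets_def)
    ultimately have "\<forall>t\<in>insert t T. homogeneous (c t) (r t) H"
      by (auto intro: homogeneous_subset)
    then show "\<exists>H\<subseteq>A. card H = k \<and> (\<forall>t\<in>insert t T. homogeneous (c t) (r t) H)"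
      using H H0 by (auto simp: nsets_def)
  qed
qed

section \<open>Traces of sub-blockades and contractions\<close>

lemma rainbow_copy_support_cong:
  assumes "I' \<subseteq> I"
    and blocks: "\<And>x i. x \<in> X \<Longrightarrow> i \<in> I \<Longrightarrow> x \<in> G i \<longleftrightarrow> i \<in> I' \<and> x \<in> F i"
  shows "rainbow_copy E I' F X n J \<longleftrightarrow> rainbow_copy E I G X n J"
    and "support I' F X = support I G X"
proof -
  have rainbow: "rainbow I' F X \<longleftrightarrow> rainbow I G X"
    unfolding rainbow_def using assms by blast
  have order:
    "(\<forall>a<n. \<forall>b<n. \<forall>i\<in>I'. \<forall>j\<in>I'. f a \<in> F i \<longrightarrow> f b \<in> F j \<longrightarrow> (a < b \<longleftrightarrow> i < j)) \<longleftrightarrow>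
     (\<forall>a<n. \<forall>b<n. \<forall>i\<in>I. \<forall>j\<in>I. f a \<in> G i \<longrightarrow> f b \<in> G j \<longrightarrow> (a < b \<longleftrightarrow> i < j))"
    if "bij_betw f {0..<n} X" for f
  proof -
    have "f a \<in> G i \<longleftrightarrow> i \<in> I' \<and> f a \<in> F i" if "a < n" "i \<in> I" for a i
      using blocks \<open>bij_betw f {0..<n} X\<close> that bij_betwE by fastforce
    then show ?thesis
      using \<open>I' \<subseteq> I\<close> by blast
  qed
  show "rainbow_copy E I' F X n J \<longleftrightarrow> rainbow_copy E I G X n J"
    unfolding rainbow_copy_def using rainbow order by (simp cong: conj_cong)
  show "support I' F X = support I G X"
    unfolding support_def using assms by blast
qed

lemma mem_block_iff_subfamily:
  assumes "I' \<subseteq> I" "disjoint_family_on G I" "\<And>i. i \<in> I' \<Longrightarrow> F i \<subseteq> G i"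
    and "X \<subseteq> (\<Union>i\<in>I'. F i)" "x \<in> X" "i \<in> I"
  shows "x \<in> G i \<longleftrightarrow> i \<in> I' \<and> x \<in> F i"
proof -
  obtain j where "j \<in> I'" "x \<in> F j"
    using assms(4,5) by blast
  moreover have "x \<in> G i \<Longrightarrow> i = j"
    using \<open>j \<in> I'\<close> \<open>x \<in> F j\<close> assms(1-3,6) unfolding disjoint_family_on_def by blast
  ultimately show ?thesis
    using assms(3) by blast
qed

lemma rainbow_copy_subset_blocks: "rainbow_copy E I D X n J \<Longrightarrow> X \<subseteq> (\<Union>i\<in>I. D i)"
  unfolding rainbow_copy_def rainbow_def by blast

lemma trace_contraction_subset:
  assumes "disjoint_family_on D I" "contraction I D C"
  shows "trace E I C n J \<subseteq> trace E I D n J"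
proof
  fix S assume "S \<in> trace E I C n J"
  then obtain X where X: "S = support I C X" "rainbow_copy E I C X n J"
    unfolding trace_def by blast
  have blocks: "\<And>x i. x \<in> X \<Longrightarrow> i \<in> I \<Longrightarrow> x \<in> D i \<longleftrightarrow> i \<in> I \<and> x \<in> C i"
    using assms X(2) by (intro mem_block_iff_subfamily rainbow_copy_subset_blocks)
      (auto simp: contraction_def)
  then show "S \<in> trace E I D n J"
    using rainbow_copy_support_cong[where X = X, OF subset_refl blocks] X unfolding trace_def by auto
qed

lemma trace_subfamily:
  assumes "I' \<subseteq> I" "disjoint_family_on G I" "\<And>i. i \<in> I' \<Longrightarrow> F i = G i"
  shows "trace E I' F n J = {S \<in> trace E I G n J. S \<subseteq> I'}"
proof (intro equalityI subsetI)
  fix S assume "S \<in> trace E I' F n J"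
  then obtain X where X: "S = support I' F X" "rainbow_copy E I' F X n J"
    unfolding trace_def by blast
  have blocks: "\<And>x i. x \<in> X \<Longrightarrow> i \<in> I \<Longrightarrow> x \<in> G i \<longleftrightarrow> i \<in> I' \<and> x \<in> F i"
    using assms X(2) by (intro mem_block_iff_subfamily rainbow_copy_subset_blocks) auto
  have "S \<subseteq> I'"
    using X(1) unfolding support_def by blast
  then show "S \<in> {S \<in> trace E I G n J. S \<subseteq> I'}"
    using rainbow_copy_support_cong[where X = X, OF \<open>I' \<subseteq> I\<close> blocks] X unfolding trace_def by auto
next
  fix S assume "S \<in> {S \<in> trace E I G n J. S \<subseteq> I'}"
  then obtain X where X: "S = support I G X" "rainbow_copy E I G X n J" "S \<subseteq> I'"
    unfolding trace_def by blast
  have "X \<subseteq> (\<Union>i\<in>I'. F i)"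
    using X assms(3) unfolding rainbow_copy_def rainbow_def support_def by blast
  then have blocks: "\<And>x i. x \<in> X \<Longrightarrow> i \<in> I \<Longrightarrow> x \<in> G i \<longleftrightarrow> i \<in> I' \<and> x \<in> F i"
    using assms by (intro mem_block_iff_subfamily) auto
  then show "S \<in> trace E I' F n J"
    using rainbow_copy_support_cong[where X = X, OF \<open>I' \<subseteq> I\<close> blocks] X unfolding trace_def by auto
qed

lemma card_support_rainbow_copy:
  assumes "disjoint_family_on D I" and X: "rainbow_copy E I D X n J"
  shows "card (support I D X) = n"
proof -
  have rainbow: "rainbow I D X" and "card X = n"
    using X unfolding rainbow_copy_def by (auto dest: bij_betw_same_card)
  then have "\<forall>x\<in>X. \<exists>i. i \<in> I \<and> x \<in> D i"
    unfolding rainbow_def by blast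
  then obtain idx where idx: "\<forall>x\<in>X. idx x \<in> I \<and> x \<in> D (idx x)"
    by metis
  have "inj_on idx X"
  proof (rule inj_onI)
    fix x y assume "x \<in> X" "y \<in> X" "idx x = idx y"
    then show "x = y"
      using idx rainbow unfolding rainbow_def by metis
  qed
  moreover have "idx ` X = support I D X"
    using idx assms(1) unfolding support_def disjoint_family_on_def by blast
  ultimately show ?thesis
    using \<open>card X = n\<close> card_image by fastforce
qed

section \<open>The trace profile\<close>

definition ordered_trees :: "nat \<Rightarrow> (nat \<times> (nat \<Rightarrow> nat \<Rightarrow> bool)) set" where
  "ordered_trees \<tau> = {(n, J). ordered_tree n J \<and> n \<le> \<tau>}"

lemma finite_ordered_trees: "finite (ordered_trees \<tau>)"
proof (rule inj_on_finite)
  let ?code = "\<lambda>(n :: nat, J :: nat \<Rightarrow> nat \<Rightarrow> bool). (n, {(a, b). J a b})"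
  show "inj_on ?code (ordered_trees \<tau>)"
    by (rule inj_onI) (auto simp: fun_eq_iff set_eq_iff split_paired_all)
  show "?code ` ordered_trees \<tau> \<subseteq> {..\<tau>} \<times> Pow ({..<\<tau>} \<times> {..<\<tau>})"
    unfolding ordered_trees_def ordered_tree_def by fastforce
qed simp

definition trace_profile ::
  "('v \<Rightarrow> 'v \<Rightarrow> bool) \<Rightarrow> int set \<Rightarrow> (int \<Rightarrow> 'v set) \<Rightarrow> nat
     \<Rightarrow> ((nat \<times> (nat \<Rightarrow> nat \<Rightarrow> bool)) \<times> int set) set" where
  "trace_profile E I D \<tau> = (SIGMA (n, J):ordered_trees \<tau>. trace E I D n J)"

lemma trace_profile_mono:
  "disjoint_family_on D I \<Longrightarrow> contraction I D C \<Longrightarrow> trace_profile E I C \<tau> \<subseteq> trace_profile E I D \<tau>"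
  unfolding trace_profile_def using trace_contraction_subset by fast

lemma trace_profile_subset:
  assumes "disjoint_family_on D I"
  shows "trace_profile E I D \<tau> \<subseteq> ordered_trees \<tau> \<times> {S. S \<subseteq> I \<and> card S \<le> \<tau>}"
proof
  fix p assume "p \<in> trace_profile E I D \<tau>"
  then obtain n J X where "p = ((n, J), support I D X)" "(n, J) \<in> ordered_trees \<tau>"
    and "rainbow_copy E I D X n J"
    unfolding trace_profile_def trace_def by blast
  then show "p \<in> ordered_trees \<tau> \<times> {S. S \<subseteq> I \<and> card S \<le> \<tau>}"
    using card_support_rainbow_copy[OF assms] unfolding ordered_trees_def support_def by auto
qed

lemma finite_trace_profile:
  assumes "finite I" "disjoint_family_on D I"
  shows "finite (trace_profile E I D \<tau>)"
proof (rule finite_subset[OF trace_profile_subset[OF assms(2)]])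
  have "{S. S \<subseteq> I \<and> card S \<le> \<tau>} \<subseteq> Pow I"
    by blast
  then show "finite (ordered_trees \<tau> \<times> {S. S \<subseteq> I \<and> card S \<le> \<tau>})"
    using assms(1) finite_ordered_trees by (auto intro: finite_subset)
qed

lemma card_subsets_card_le:
  assumes "finite I" "I \<noteq> {}"
  shows "card {S. S \<subseteq> I \<and> card S \<le> \<tau>} \<le> (\<tau> + 1) * card I ^ \<tau>"
proof -
  have "{S. S \<subseteq> I \<and> card S \<le> \<tau>} = (\<Union>n\<le>\<tau>. [I]\<^bsup>n\<^esup>)"
    using assms(1) by (auto simp: nsets_def intro: finite_subset)
  then have "card {S. S \<subseteq> I \<and> card S \<le> \<tau>} \<le> (\<Sum>n\<le>\<tau>. card I choose n)"
    using card_UN_le[of "{..\<tau>}" "nsets I"] by simp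
  also have "\<dots> \<le> (\<Sum>n\<le>\<tau>. card I ^ \<tau>)"
  proof (rule sum_mono)
    fix n assume "n \<in> {..\<tau>}"
    have "card I choose n \<le> card I ^ n"
      using binomial_fact_pow[of "card I" n] fact_ge_1[where 'a = nat, of n]
      by (metis le_trans mult.right_neutral mult_le_mono2)
    also have "\<dots> \<le> card I ^ \<tau>"
      using assms \<open>n \<in> {..\<tau>}\<close> by (auto intro: power_increasing simp: Suc_le_eq card_gt_0_iff)
    finally show "card I choose n \<le> card I ^ \<tau>" .
  qed
  finally show ?thesis
    by simp
qed

text \<open>Compare with \<open>(K / (t+1))^(t+1) \<le> K choose (t+1) \<le> 2^K\<close>.\<close>
lemma mult_power_le_two_power:
  fixes c t K :: nat
  assumes "c * (t + 1) ^ (t + 1) \<le> K" and "t + 1 \<le> K"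
  shows "c * K ^ t \<le> 2 ^ K"
proof -
  define s where "s = t + 1"
  have "real c * real s ^ s \<le> real K"
    using assms(1) unfolding s_def by (metis of_nat_le_iff of_nat_mult of_nat_power)
  then have "real c \<le> real K / real s ^ s"
    by (simp add: pos_le_divide_eq s_def)
  then have "real c * real K ^ t \<le> real K / real s ^ s * real K ^ t"
    by (rule mult_right_mono) simp
  also have "\<dots> = (real K / real s) ^ s"
    by (simp add: power_divide s_def)
  also have "\<dots> \<le> real (K choose s)"
    using assms(2) unfolding s_def by (rule binomial_ge_n_over_k_pow_k)
  also have "\<dots> \<le> 2 ^ K"
    using binomial_le_pow2 by (metis of_nat_le_iff of_nat_numeral of_nat_power)
  finally show ?thesis
    by (metis of_nat_le_iff of_nat_mult of_nat_numeral of_nat_power)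
qed

lemma card_trace_profile_le_two_power:
  assumes "finite I" "disjoint_family_on D I"
    and "card (ordered_trees \<tau>) * (\<tau> + 1) * (\<tau> + 1) ^ (\<tau> + 1) \<le> card I" "\<tau> < card I"
  shows "card (trace_profile E I D \<tau>) \<le> 2 ^ card I"
proof -
  have "I \<noteq> {}"
    using assms(4) by auto
  have "card (trace_profile E I D \<tau>) \<le> card (ordered_trees \<tau> \<times> {S. S \<subseteq> I \<and> card S \<le> \<tau>})"
    using trace_profile_subset[OF assms(2)] assms(1) finite_ordered_trees by (intro card_mono) auto
  also have "\<dots> \<le> card (ordered_trees \<tau>) * ((\<tau> + 1) * card I ^ \<tau>)"
    using card_subsets_card_le[OF assms(1) \<open>I \<noteq> {}\<close>]
    by (subst card_cartesian_product) (rule mult_le_mono2)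
  also have "\<dots> = card (ordered_trees \<tau>) * (\<tau> + 1) * card I ^ \<tau>"
    by (simp only: mult.assoc)
  also have "\<dots> \<le> 2 ^ card I"
    using assms(3,4) by (intro mult_power_le_two_power) auto
  finally show ?thesis .
qed

section \<open>Support-invariant contractions\<close>

lemma width_le_card: "finite I \<Longrightarrow> i \<in> I \<Longrightarrow> width I D \<le> card (D i)"
  unfolding width_def by simp

lemma width_attained:
  assumes "finite I" "I \<noteq> {}"
  shows "\<exists>i\<in>I. width I D = card (D i)"
proof -
  have "width I D \<in> (\<lambda>i. card (D i)) ` I"
    unfolding width_def using assms by (intro Min_in) auto
  then show ?thesis
    by auto
qed

lemma le_width_if_width_at_least:
  assumes "finite I" "I \<noteq> {}" "width_at_least I D x"
  shows "x \<le> real (width I D)"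
proof -
  obtain i where "i \<in> I" "width I D = card (D i)"
    using width_attained[OF assms(1,2)] by blast
  then show ?thesis
    using assms(3) unfolding width_at_least_def by simp
qed

lemma width_at_least_mult_width:
  assumes "finite I" "0 \<le> \<kappa>" "\<kappa> \<le> 1"
  shows "width_at_least I D (\<kappa> * real (width I D))"
  unfolding width_at_least_def
  using assms width_le_card[OF assms(1)] mult_left_le_one_le[of "real (width I D)" \<kappa>]
  by (metis of_nat_0_le_iff of_nat_le_iff order_trans)

lemma contraction_trans: "contraction I D C \<Longrightarrow> contraction I C C' \<Longrightarrow> contraction I D C'"
  unfolding contraction_def by blast

lemma disjoint_family_on_contraction:
  "disjoint_family_on D I \<Longrightarrow> contraction I D C \<Longrightarrow> disjoint_family_on C I"
  unfolding contraction_def disjoint_family_on_def by blast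

lemma trace_profile_psubset_if_not_support_invariant:
  assumes "disjoint_family_on D I" "\<not> support_invariant E I D \<kappa> \<tau>"
  obtains C where "contraction I D C" "width_at_least I C (\<kappa> * real (width I D))"
    "trace_profile E I C \<tau> \<subset> trace_profile E I D \<tau>"
proof -
  obtain C n J where C: "contraction I D C" "width_at_least I C (\<kappa> * real (width I D))"
    and "(n, J) \<in> ordered_trees \<tau>" "trace E I D n J \<noteq> trace E I C n J"
    using assms(2) unfolding support_invariant_def ordered_trees_def by blast
  moreover have "trace E I C n J \<subseteq> trace E I D n J"
    using trace_contraction_subset[OF assms(1) C(1)] .
  ultimately have "trace_profile E I C \<tau> \<noteq> trace_profile E I D \<tau>"
    unfolding trace_profile_def by blast
  then show ?thesis
    using that C trace_profile_mono[OF assms(1) C(1)] by blast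
qed

lemma support_invariant_contraction_exists:
  assumes I: "finite I" "I \<noteq> {}" and \<kappa>: "0 \<le> \<kappa>" "\<kappa> \<le> 1"
  shows "disjoint_family_on D I \<Longrightarrow> \<forall>i\<in>I. D i \<noteq> {} \<Longrightarrow> card (trace_profile E I D \<tau>) \<le> m \<Longrightarrow>
    \<exists>D'. contraction I D D' \<and> support_invariant E I D' \<kappa> \<tau>
      \<and> \<kappa> ^ m * real (width I D) \<le> real (width I D')"
proof (induction m arbitrary: D rule: less_induct)
  case (less m D)
  show ?case
  proof (cases "support_invariant E I D \<kappa> \<tau>")
    case True
    have "\<kappa> ^ m * real (width I D) \<le> real (width I D)"
      using \<kappa> by (simp add: mult_left_le_one_le power_le_one)
    moreover have "contraction I D D"
      using less.prems(2) unfolding contraction_def by blast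
    ultimately show ?thesis
      using True by blast
  next
    case False
    then obtain C where C: "contraction I D C" "width_at_least I C (\<kappa> * real (width I D))"
      and shrink: "trace_profile E I C \<tau> \<subset> trace_profile E I D \<tau>"
      using trace_profile_psubset_if_not_support_invariant less.prems(1) by blast
    define p where "p = card (trace_profile E I C \<tau>)"
    have "p < m"
      using psubset_card_mono[OF finite_trace_profile[OF I(1) less.prems(1)] shrink] less.prems(3)
      unfolding p_def by linarith
    moreover have "disjoint_family_on C I" "\<forall>i\<in>I. C i \<noteq> {}"
      using disjoint_family_on_contraction[OF less.prems(1) C(1)] C(1)
      unfolding contraction_def by auto
    ultimately obtain D' where D': "contraction I C D'" "support_invariant E I D' \<kappa> \<tau>"
      "\<kappa> ^ p * real (width I C) \<le> real (width I D')"
      using less.IH[of p C] unfolding p_def by blast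
    have "\<kappa> ^ m \<le> \<kappa> ^ Suc p"
      using \<kappa> \<open>p < m\<close> by (intro power_decreasing) auto
    then have "\<kappa> ^ m * real (width I D) \<le> \<kappa> ^ Suc p * real (width I D)"
      by (rule mult_right_mono) simp
    also have "\<dots> = \<kappa> ^ p * (\<kappa> * real (width I D))"
      by simp
    also have "\<dots> \<le> \<kappa> ^ p * real (width I C)"
      using le_width_if_width_at_least[OF I C(2)] \<kappa> by (simp add: mult_left_mono)
    also have "\<dots> \<le> real (width I D')"
      by (fact D'(3))
    finally show ?thesis
      using contraction_trans[OF C(1) D'(1)] D'(2) by blast
  qed
qed

lemma equicardinal_contraction_exists:
  assumes "finite I" "\<forall>i\<in>I. finite (D i) \<and> D i \<noteq> {}"
  obtains C where "contraction I D C" "\<forall>i\<in>I. card (C i) = width I D"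
proof -
  have "\<forall>i\<in>I. \<exists>T. T \<subseteq> D i \<and> card T = width I D"
  proof
    fix i assume "i \<in> I"
    then show "\<exists>T. T \<subseteq> D i \<and> card T = width I D"
      using width_le_card[OF assms(1)] by (meson obtain_subset_with_card_n)
  qed
  then obtain C where C: "\<forall>i\<in>I. C i \<subseteq> D i \<and> card (C i) = width I D"
    by metis
  have "C i \<noteq> {}" if i: "i \<in> I" for i
  proof -
    obtain j where "j \<in> I" "width I D = card (D j)"
      using width_attained[OF assms(1)] i by blast
    then have "0 < width I D"
      using assms(2) by (simp add: card_gt_0_iff)
    moreover have "card (C i) = width I D"
      using C i by blast
    ultimately show ?thesis
      by auto
  qed
  then have "contraction I D C"
    using C unfolding contraction_def by blast
  with C show ?thesis
    using that by blast
qed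

lemma support_invariant_wide_contraction:
  assumes "support_invariant E I D \<kappa> \<tau>" "contraction I D C" "width I D \<le> width I C"
    and "finite I" "0 \<le> \<kappa>" "\<kappa> \<le> 1"
  shows "support_invariant E I C \<kappa> \<tau>"
  unfolding support_invariant_def
proof (intro allI impI)
  fix C' n J
  assume C': "contraction I C C' \<and> width_at_least I C' (\<kappa> * real (width I C))"
    and tree: "ordered_tree n J \<and> n \<le> \<tau>"
  have "\<kappa> * real (width I D) \<le> \<kappa> * real (width I C)"
    using assms(3,5) by (simp add: mult_left_mono)
  then have "width_at_least I C (\<kappa> * real (width I D))"
    "width_at_least I C' (\<kappa> * real (width I D))"
    using width_at_least_mult_width[OF assms(4-6), of C] C' unfolding width_at_least_def by auto
  then show "trace E I C n J = trace E I C' n J"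
    using assms(1,2) C' contraction_trans tree unfolding support_invariant_def by metis
qed

text \<open>A wide contraction of a sub-blockade extends, by the old blocks outside it, to a wide
  contraction of the whole blockade.\<close>
lemma support_invariant_subfamily:
  assumes "support_invariant E I D \<kappa> \<tau>" "disjoint_family_on D I" "\<forall>i\<in>I. D i \<noteq> {}"
    and "I' \<subseteq> I" "finite I" "0 \<le> \<kappa>" "\<kappa> \<le> 1"
  shows "support_invariant E I' D \<kappa> \<tau>"
  unfolding support_invariant_def
proof (intro allI impI)
  fix C n J
  assume C: "contraction I' D C \<and> width_at_least I' C (\<kappa> * real (width I' D))"
    and tree: "ordered_tree n J \<and> n \<le> \<tau>"
  define C' where "C' i = (if i \<in> I' then C i else D i)" for i
  have "contraction I D C'"
    using C assms(3) unfolding contraction_def C'_def by auto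
  moreover have "width_at_least I C' (\<kappa> * real (width I D))"
  proof -
    have "\<kappa> * real (width I D) \<le> real (card (C i))" if "i \<in> I'" for i
    proof -
      have "width I D \<le> width I' D"
        using assms(4,5) that unfolding width_def by (intro Min_antimono) (auto intro: finite_subset)
      then have "\<kappa> * real (width I D) \<le> \<kappa> * real (width I' D)"
        using assms(6) by (simp add: mult_left_mono)
      then show ?thesis
        using C that unfolding width_at_least_def by force
    qed
    then show ?thesis
      using width_at_least_mult_width[OF assms(5-7), of D] unfolding width_at_least_def C'_def by auto
  qed
  ultimately have "trace E I D n J = trace E I C' n J"
    using assms(1) tree unfolding support_invariant_def by blast
  moreover have "disjoint_family_on C' I"
    using disjoint_family_on_contraction[OF assms(2) \<open>contraction I D C'\<close>] .
  ultimately show "trace E I' D n J = trace E I' C n J"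
    using trace_subfamily[OF assms(4) assms(2), of D] trace_subfamily[OF assms(4), of C' C]
    unfolding C'_def by simp
qed

lemma support_uniform_if_homogeneous:
  assumes "disjoint_family_on D I" "I' \<subseteq> I"
    and hom: "\<forall>(n, J)\<in>ordered_trees \<tau>. homogeneous (\<lambda>S. S \<in> trace E I D n J) n I'"
  shows "support_uniform E I' D \<tau>"
  unfolding support_uniform_def
proof (intro allI impI)
  fix n J assume tree: "ordered_tree n J \<and> n \<le> \<tau>"
  define T where "T = trace E I D n J"
  have hom_T: "homogeneous (\<lambda>S. S \<in> T) n I'"
    using hom tree unfolding ordered_trees_def T_def by blast
  have card_T: "card S = n" if "S \<in> T" for S
    using that card_support_rainbow_copy[OF assms(1)] unfolding T_def trace_def by blast
  have "0 < n"
    using tree unfolding ordered_tree_def by simp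
  have restrict: "trace E I' D n J = {S \<in> T. S \<subseteq> I'}"
    using trace_subfamily[OF assms(2,1)] unfolding T_def by blast
  show "trace E I' D n J = {} \<or> trace E I' D n J = {S. S \<subseteq> I' \<and> card S = n}"
  proof (cases "trace E I' D n J = {}")
    case False
    then obtain S0 where S0: "S0 \<in> T" "S0 \<subseteq> I'"
      using restrict by blast
    have "S \<in> T" if S: "S \<subseteq> I'" "card S = n" for S
    proof -
      have "S \<in> [I']\<^bsup>n\<^esup>" "S0 \<in> [I']\<^bsup>n\<^esup>"
        using S S0 card_T[OF S0(1)] \<open>0 < n\<close> by (auto simp: nsets_def intro: card_ge_0_finite)
      then show ?thesis
        using hom_T S0(1) unfolding homogeneous_def by blast
    qed
    then have "{S \<in> T. S \<subseteq> I'} = {S. S \<subseteq> I' \<and> card S = n}"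
      using card_T by blast
    then show ?thesis
      using restrict by blast
  qed simp
qed

section \<open>Support-uniform minors\<close>

lemma equicardinal_support_invariant_contraction_exists:
  assumes "finite I" "I \<noteq> {}" "disjoint_family_on D I" "\<forall>i\<in>I. finite (D i) \<and> D i \<noteq> {}"
    and "0 \<le> \<kappa>" "\<kappa> \<le> 1" "card (trace_profile E I D \<tau>) \<le> m"
  obtains C w where "contraction I D C" "support_invariant E I C \<kappa> \<tau>" "\<forall>i\<in>I. card (C i) = w"
    "\<kappa> ^ m * real (width I D) \<le> real w"
proof -
  obtain D' where D': "contraction I D D'" "support_invariant E I D' \<kappa> \<tau>"
    "\<kappa> ^ m * real (width I D) \<le> real (width I D')"
    using support_invariant_contraction_exists[OF assms(1,2,5,6,3) _ assms(7)] assms(4) by blast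
  have "\<forall>i\<in>I. finite (D' i) \<and> D' i \<noteq> {}"
    using D'(1) assms(4) unfolding contraction_def by (metis finite_subset)
  then obtain C where C: "contraction I D' C" "\<forall>i\<in>I. card (C i) = width I D'"
    using equicardinal_contraction_exists[OF assms(1)] by blast
  obtain i where "i \<in> I" "width I C = card (C i)"
    using width_attained[OF assms(1,2)] by blast
  then have "width I D' \<le> width I C"
    using C(2) by simp
  then have "support_invariant E I C \<kappa> \<tau>"
    using support_invariant_wide_contraction[OF D'(2) C(1) _ assms(1,5,6)] by simp
  with contraction_trans[OF D'(1) C(1)] show ?thesis
    using C(2) D'(3) by (rule that)
qed

lemma blocks_of_blockade:
  assumes "graph V E" "blockade V I B"
  shows "disjoint_family_on B I" "\<forall>i\<in>I. finite (B i) \<and> B i \<noteq> {}"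
proof -
  have "finite V"
    using assms(1) unfolding graph_def by blast
  then show "\<forall>i\<in>I. finite (B i) \<and> B i \<noteq> {}"
    using assms(2) unfolding blockade_def by (metis finite_subset)
  show "disjoint_family_on B I"
    using assms(2) unfolding blockade_def disjoint_family_on_def by blast
qed

lemma support_uniform_invariant_minor_exists:
  assumes "finite I" "I \<noteq> {}" "disjoint_family_on B I" "\<forall>i\<in>I. finite (B i) \<and> B i \<noteq> {}"
    and "0 \<le> \<kappa>" "\<kappa> \<le> 1" "card (trace_profile E I B \<tau>) \<le> m"
    and ramsey: "\<And>c :: nat \<times> (nat \<Rightarrow> nat \<Rightarrow> bool) \<Rightarrow> int set \<Rightarrow> bool.
      \<exists>H\<subseteq>I. card H = k \<and> (\<forall>t\<in>ordered_trees \<tau>. homogeneous (c t) (fst t) H)"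
  shows "\<exists>I' B'. minor I B I' B' \<and> card I' = k \<and> equicardinal I' B'
    \<and> width_at_least I' B' (\<kappa> ^ m * real (width I B))
    \<and> support_uniform E I' B' \<tau> \<and> support_invariant E I' B' \<kappa> \<tau>"
proof -
  obtain C w where C: "contraction I B C" "support_invariant E I C \<kappa> \<tau>"
    "\<forall>i\<in>I. card (C i) = w" "\<kappa> ^ m * real (width I B) \<le> real w"
    by (rule equicardinal_support_invariant_contraction_exists[OF assms(1-7)])
  obtain H where H: "H \<subseteq> I" "card H = k"
    "\<forall>t\<in>ordered_trees \<tau>. homogeneous ((\<lambda>(n, J) S. S \<in> trace E I C n J) t) (fst t) H"
    using ramsey by blast
  then have hom: "\<forall>(n, J)\<in>ordered_trees \<tau>. homogeneous (\<lambda>S. S \<in> trace E I C n J) n H"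
    by auto
  have C_blocks: "disjoint_family_on C I" "\<forall>i\<in>I. C i \<noteq> {}"
    using disjoint_family_on_contraction[OF assms(3) C(1)] C(1) unfolding contraction_def by auto
  show ?thesis
  proof (intro exI conjI)
    show "minor I B H C"
      using H(1) C(1) unfolding minor_def contraction_def by blast
    show "equicardinal H C"
      using H(1) C(3) unfolding equicardinal_def by (metis subsetD)
    show "width_at_least H C (\<kappa> ^ m * real (width I B))"
      using H(1) C(3,4) unfolding width_at_least_def by (metis subsetD)
    show "support_uniform E H C \<tau>"
      using support_uniform_if_homogeneous[OF C_blocks(1) H(1) hom] .
    show "support_invariant E H C \<kappa> \<tau>"
      using support_invariant_subfamily[OF C(2) C_blocks H(1) assms(1,5,6)] .
  qed (fact H(2))
qed

theorem theorem4p3: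
  fixes k \<tau> :: nat and \<kappa> :: real
  assumes "\<tau> \<ge> 1" and "0 < \<kappa>" and "\<kappa> \<le> 1"
  shows "\<exists>K::nat. \<forall>(V::nat set) E B. graph V E \<and> blockade V {1..int K} B \<longrightarrow>
           (\<exists>I' B'. minor {1..int K} B I' B' \<and> card I' = k \<and> equicardinal I' B'
              \<and> width_at_least I' B' (\<kappa> ^ (2 ^ K * \<tau> ^ \<tau>) * real (width {1..int K} B))
              \<and> support_uniform E I' B' \<tau> \<and> support_invariant E I' B' \<kappa> \<tau>)"
proof -
  obtain N where N: "\<forall>(A :: int set) (c :: _ \<Rightarrow> _ \<Rightarrow> bool). finite A \<and> N \<le> card A \<longrightarrow>
      (\<exists>H\<subseteq>A. card H = k \<and> (\<forall>t\<in>ordered_trees \<tau>. homogeneous (c t) (fst t) H))"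
    using ramsey_simultaneous[OF finite_ordered_trees] by blast
  define K where "K = max N (max (Suc \<tau>) (card (ordered_trees \<tau>) * (\<tau> + 1) * (\<tau> + 1) ^ (\<tau> + 1)))"
  define I where "I = {1..int K}"
  have I: "finite I" "I \<noteq> {}" "card I = K"
    unfolding I_def K_def by auto
  have "\<exists>I' B'. minor I B I' B' \<and> card I' = k \<and> equicardinal I' B'
      \<and> width_at_least I' B' (\<kappa> ^ (2 ^ K * \<tau> ^ \<tau>) * real (width I B))
      \<and> support_uniform E I' B' \<tau> \<and> support_invariant E I' B' \<kappa> \<tau>"
    if "graph V E" "blockade V I B" for V :: "nat set" and E B
  proof (rule support_uniform_invariant_minor_exists[OF I(1,2) blocks_of_blockade[OF that]])
    have "card (trace_profile E I B \<tau>) \<le> 2 ^ K"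
      using card_trace_profile_le_two_power[OF I(1) blocks_of_blockade(1)[OF that]] I(3)
      unfolding K_def by simp
    then show "card (trace_profile E I B \<tau>) \<le> 2 ^ K * \<tau> ^ \<tau>"
      using assms(1) by (simp add: order_trans)
    show "\<exists>H\<subseteq>I. card H = k \<and> (\<forall>t\<in>ordered_trees \<tau>. homogeneous (c t) (fst t) H)"
      for c :: "_ \<Rightarrow> _ \<Rightarrow> bool"
      using N I unfolding K_def by simp
  qed (use assms(2,3) in auto)
  then show ?thesis
    unfolding I_def by blast
qed

end
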